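(* Under the ICMHD equations, $$\frac{D^2(\rho^{-1}\mathbf{B})}{Dt^2}-\frac{d^2\mathbf{B}}{ds^2}=-\frac{d}{ds}\big(\rho^{-1}\nabla\varpi\big),$$ equivalently $\frac{D^2\mathbf{B}_\rho}{Dt^2}=\frac{d}{ds}\frac{D\mathbf{u}}{Dt}=\mathbf{B}_\rho\cdot\nabla\Big(-\rho^{-1}\nabla p+\mathbf{J}\times\mathbf{B}_\rho\Big)$.
   Context: ICMHD setting: smooth fields on a domain of $\mathbb{R}^3$: velocity $\mathbf{u}$, density $\rho>0$, specific entropy $\sigma$, pressure $p$, magnetic field $\mathbf{B}$ with $\operatorname{div}\mathbf{B}=0$, current $\mathbf{J}=\operatorname{curl}\mathbf{B}$, satisfying $$\rho\frac{D\mathbf{u}}{Dt}=-\nabla p+\mathbf{J}\times\mathbf{B},\quad \partial_t\mathbf{B}=\operatorname{curl}(\mathbf{u}\times\mathbf{B}),\quad \frac{D\sigma}{Dt}=0,\quad \frac{D\rho^{-1}}{Dt}=\rho^{-1}\operatorname{div}\mathbf{u},$$ with $\frac{D}{Dt}=\partial_t+\mathbf{u}\cdot\nabla$. Notation: $\mathbf{B}_\rho=\rho^{-1}\mathbf{B}$, $\frac{d}{ds}=\mathbf{B}_\rho\cdot\nabla$ (applied componentwise to vectors), $\varpi=p+\tfrac12|\mathbf{B}|^2$. *)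

theory Defs
  imports "HOL-Analysis.Analysis"
begin

type_synonym pt = "real \<times> (real^3)"

definition dirderiv :: "pt \<Rightarrow> (pt \<Rightarrow> 'b::real_normed_vector) \<Rightarrow> pt \<Rightarrow> 'b" where
  "dirderiv v f p = vector_derivative (\<lambda>h::real. f (p + h *\<^sub>R v)) (at 0)"

fun iter_dirderiv :: "pt list \<Rightarrow> (pt \<Rightarrow> 'b::real_normed_vector) \<Rightarrow> pt \<Rightarrow> 'b" where
  "iter_dirderiv [] f = f"
| "iter_dirderiv (v # vs) f = dirderiv v (iter_dirderiv vs f)"

definition smooth_on :: "pt set \<Rightarrow> (pt \<Rightarrow> 'b::real_normed_vector) \<Rightarrow> bool" where
  "smooth_on S f \<longleftrightarrow> (\<forall>vs. set vs \<subseteq> Basis \<longrightarrow> iter_dirderiv vs f differentiable_on S)"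

definition dt :: "(pt \<Rightarrow> 'b::real_normed_vector) \<Rightarrow> pt \<Rightarrow> 'b" where
  "dt f = dirderiv (1, 0) f"

definition dx :: "3 \<Rightarrow> (pt \<Rightarrow> 'b::real_normed_vector) \<Rightarrow> pt \<Rightarrow> 'b" where
  "dx i f = dirderiv (0, axis i 1) f"

definition grad :: "(pt \<Rightarrow> real) \<Rightarrow> pt \<Rightarrow> real^3" where
  "grad f p = (\<chi> i. dx i f p)"

definition divg :: "(pt \<Rightarrow> real^3) \<Rightarrow> pt \<Rightarrow> real" where
  "divg F p = (\<Sum>i\<in>UNIV. dx i (\<lambda>q. F q $ i) p)"

definition curl :: "(pt \<Rightarrow> real^3) \<Rightarrow> pt \<Rightarrow> real^3" where
  "curl F p = vector [dx 2 (\<lambda>q. F q $ 3) p - dx 3 (\<lambda>q. F q $ 2) p,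
                      dx 3 (\<lambda>q. F q $ 1) p - dx 1 (\<lambda>q. F q $ 3) p,
                      dx 1 (\<lambda>q. F q $ 2) p - dx 2 (\<lambda>q. F q $ 1) p]"

text \<open>Material derivative D/Dt = \<partial>_t + u\<cdot>\<nabla> (componentwise on vectors).\<close>
definition matder :: "(pt \<Rightarrow> real^3) \<Rightarrow> (pt \<Rightarrow> 'b::real_normed_vector) \<Rightarrow> pt \<Rightarrow> 'b" where
  "matder u f p = dt f p + (\<Sum>i\<in>UNIV. (u p $ i) *\<^sub>R dx i f p)"

definition along :: "(pt \<Rightarrow> real^3) \<Rightarrow> (pt \<Rightarrow> 'b::real_normed_vector) \<Rightarrow> pt \<Rightarrow> 'b" where
  "along w f p = (\<Sum>i\<in>UNIV. (w p $ i) *\<^sub>R dx i f p)"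

text \<open>B_\<rho> = \<rho>^{-1} B and d/ds = B_\<rho>\<cdot>\<nabla>.\<close>
definition Brho :: "(pt \<Rightarrow> real) \<Rightarrow> (pt \<Rightarrow> real^3) \<Rightarrow> pt \<Rightarrow> real^3" where
  "Brho \<rho> B p = inverse (\<rho> p) *\<^sub>R B p"

definition dds :: "(pt \<Rightarrow> real) \<Rightarrow> (pt \<Rightarrow> real^3) \<Rightarrow> (pt \<Rightarrow> 'b::real_normed_vector) \<Rightarrow> pt \<Rightarrow> 'b" where
  "dds \<rho> B f = along (Brho \<rho> B) f"

definition ICMHD :: "pt set \<Rightarrow> (pt \<Rightarrow> real^3) \<Rightarrow> (pt \<Rightarrow> real) \<Rightarrow> (pt \<Rightarrow> real)
    \<Rightarrow> (pt \<Rightarrow> real) \<Rightarrow> (pt \<Rightarrow> real^3) \<Rightarrow> bool" where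
  "ICMHD \<Omega> u \<rho> \<sigma> pr B \<longleftrightarrow>
     open \<Omega> \<and>
     smooth_on \<Omega> u \<and> smooth_on \<Omega> \<rho> \<and> smooth_on \<Omega> \<sigma> \<and> smooth_on \<Omega> pr \<and> smooth_on \<Omega> B \<and>
     (\<forall>p\<in>\<Omega>.
        \<rho> p > 0 \<and>
        divg B p = 0 \<and>
        \<rho> p *\<^sub>R matder u u p = - grad pr p + cross3 (curl B p) (B p) \<and>
        dt B p = curl (\<lambda>q. cross3 (u q) (B q)) p \<and>
        matder u \<sigma> p = 0 \<and>
        matder u (\<lambda>q. inverse (\<rho> q)) p = inverse (\<rho> p) * divg u p)"

text \<open>Total pressure \<varpi> = p + |B|^2/2.\<close>
definition totpress :: "(pt \<Rightarrow> real) \<Rightarrow> (pt \<Rightarrow> real^3) \<Rightarrow> pt \<Rightarrow> real" where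
  "totpress pr B q = pr q + (1/2) * (norm (B q))\<^sup>2"

end

theory Submission
  imports Defs
begin

text \<open>
  Mass conservation, the induction equation and \<open>div B = 0\<close> combine, through the expansion of
  \<open>curl (u \<times> B)\<close>, into the frozen-in law \<open>DB\<^sub>\<rho>/Dt = B\<^sub>\<rho>\<cdot>\<nabla>u\<close>.
  By the symmetry of mixed partial derivatives of \<open>u\<close>, the commutator of \<open>D/Dt\<close> and \<open>b\<cdot>\<nabla>\<close>
  is \<open>(Db/Dt - b\<cdot>\<nabla>u)\<cdot>\<nabla>\<close>, which vanishes for \<open>b = B\<^sub>\<rho>\<close>; hence
  \<open>D\<^sup>2B\<^sub>\<rho>/Dt\<^sup>2 = d/ds (Du/Dt)\<close>. The momentum equation gives
  \<open>Du/Dt = -\<rho>\<^sup>-\<^sup>1\<nabla>p + J \<times> B\<^sub>\<rho>\<close>, and \<open>J \<times> B = B\<cdot>\<nabla>B - \<nabla>(|B|\<^sup>2/2)\<close> turns this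
  into \<open>dB/ds - \<rho>\<^sup>-\<^sup>1\<nabla>\<varpi>\<close>.
\<close>

section \<open>Directional derivatives\<close>

lemma dirderiv_has_derivative:
  assumes "(f has_derivative f') (at x)"
  shows "dirderiv v f x = f' v"
proof -
  have "((\<lambda>h::real. x + h *\<^sub>R v) has_derivative (\<lambda>h. h *\<^sub>R v)) (at 0)"
    by (auto intro!: derivative_eq_intros)
  moreover have "(f has_derivative f') (at (x + (0::real) *\<^sub>R v))"
    using assms by simp
  ultimately have "((\<lambda>h. f (x + h *\<^sub>R v)) has_derivative (\<lambda>h. f' (h *\<^sub>R v))) (at 0)"
    by (rule has_derivative_compose)
  then have "((\<lambda>h. f (x + h *\<^sub>R v)) has_vector_derivative f' v) (at 0)"
    by (simp add: has_vector_derivative_def linear_cmul[OF has_derivative_linear[OF assms]])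
  then show ?thesis
    unfolding dirderiv_def by (rule vector_derivative_at)
qed

lemma dirderiv_eq_frechet_derivative:
  "f differentiable (at x) \<Longrightarrow> dirderiv v f x = frechet_derivative f (at x) v"
  by (rule dirderiv_has_derivative) (simp add: frechet_derivative_works[symmetric])

lemma dirderiv_bounded_bilinear:
  assumes "bounded_bilinear bil" "f differentiable (at x)" "g differentiable (at x)"
  shows "dirderiv v (\<lambda>q. bil (f q) (g q)) x = bil (dirderiv v f x) (g x) + bil (f x) (dirderiv v g x)"
proof -
  obtain f' g' where f': "(f has_derivative f') (at x)" and g': "(g has_derivative g') (at x)"
    using assms(2,3) by (auto simp: differentiable_def)
  show ?thesis
    using bounded_bilinear.FDERIV[OF assms(1) f' g'] f' g' by (simp add: dirderiv_has_derivative)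
qed

lemma differentiable_bounded_bilinear:
  assumes "bounded_bilinear bil" "f differentiable (at x)" "g differentiable (at x)"
  shows "(\<lambda>q. bil (f q) (g q)) differentiable (at x)"
  using bounded_bilinear.FDERIV[OF assms(1)] assms(2,3) unfolding differentiable_def by blast

lemma differentiable_bounded_linear:
  assumes "bounded_linear L" "f differentiable (at x)"
  shows "(\<lambda>q. L (f q)) differentiable (at x)"
  using bounded_linear.has_derivative[OF assms(1)] assms(2) unfolding differentiable_def by blast

lemma dirderiv_bounded_linear:
  assumes "bounded_linear L" "f differentiable (at x)"
  shows "dirderiv v (\<lambda>q. L (f q)) x = L (dirderiv v f x)"
proof -
  obtain f' where f': "(f has_derivative f') (at x)"
    using assms(2) by (auto simp: differentiable_def)
  show ?thesis
    using bounded_linear.has_derivative[OF assms(1) f'] f' by (simp add: dirderiv_has_derivative)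
qed

lemma dirderiv_sum:
  assumes "\<And>i. i \<in> I \<Longrightarrow> f i differentiable (at x)"
  shows "dirderiv v (\<lambda>q. \<Sum>i\<in>I. f i q) x = (\<Sum>i\<in>I. dirderiv v (f i) x)"
proof -
  have "((\<lambda>q. \<Sum>i\<in>I. f i q) has_derivative (\<lambda>h. \<Sum>i\<in>I. frechet_derivative (f i) (at x) h)) (at x)"
    using assms by (intro has_derivative_sum) (simp add: frechet_derivative_works[symmetric])
  then show ?thesis
    using assms by (simp add: dirderiv_has_derivative dirderiv_eq_frechet_derivative)
qed

lemma dirderiv_add:
  assumes "f differentiable (at x)" "g differentiable (at x)"
  shows "dirderiv v (\<lambda>q. f q + g q) x = dirderiv v f x + dirderiv v g x"
proof -
  obtain f' g' where f': "(f has_derivative f') (at x)" and g': "(g has_derivative g') (at x)"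
    using assms by (auto simp: differentiable_def)
  show ?thesis
    using dirderiv_has_derivative[OF has_derivative_add[OF f' g']]
    by (simp add: dirderiv_has_derivative[OF f'] dirderiv_has_derivative[OF g'])
qed

lemma dirderiv_diff:
  assumes "f differentiable (at x)" "g differentiable (at x)"
  shows "dirderiv v (\<lambda>q. f q - g q) x = dirderiv v f x - dirderiv v g x"
proof -
  obtain f' g' where f': "(f has_derivative f') (at x)" and g': "(g has_derivative g') (at x)"
    using assms by (auto simp: differentiable_def)
  show ?thesis
    using dirderiv_has_derivative[OF has_derivative_diff[OF f' g']]
    by (simp add: dirderiv_has_derivative[OF f'] dirderiv_has_derivative[OF g'])
qed

lemma dirderiv_cong_open:
  assumes "open S" "x \<in> S" "\<And>y. y \<in> S \<Longrightarrow> f y = g y"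
  shows "dirderiv v f x = dirderiv v g x"
proof -
  have "((\<lambda>h::real. x + h *\<^sub>R v) \<longlongrightarrow> x) (nhds 0)"
    by (auto intro!: tendsto_eq_intros filterlim_ident)
  then have "eventually (\<lambda>h::real. x + h *\<^sub>R v \<in> S) (nhds 0)"
    using assms(1,2) by (rule topological_tendstoD)
  then have "eventually (\<lambda>h::real. h \<in> UNIV \<longrightarrow> f (x + h *\<^sub>R v) = g (x + h *\<^sub>R v)) (nhds 0)"
    by eventually_elim (simp add: assms(3))
  then show ?thesis
    unfolding dirderiv_def by (rule vector_derivative_cong_eq) simp_all
qed

section \<open>Symmetry of mixed directional derivatives\<close>

lemma has_real_derivative_dirderiv_line:
  fixes f :: "pt \<Rightarrow> real"
  assumes "f differentiable (at (a + s *\<^sub>R v))"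
  shows "((\<lambda>t. f (a + t *\<^sub>R v)) has_real_derivative dirderiv v f (a + s *\<^sub>R v)) (at s)"
proof -
  obtain f' where f': "(f has_derivative f') (at (a + s *\<^sub>R v))"
    using assms by (auto simp: differentiable_def)
  have "((\<lambda>t::real. a + t *\<^sub>R v) has_derivative (\<lambda>h. h *\<^sub>R v)) (at s)"
    by (auto intro!: derivative_eq_intros)
  from has_derivative_compose[OF this f']
  have "((\<lambda>t. f (a + t *\<^sub>R v)) has_derivative (\<lambda>h. f' v * h)) (at s)"
    by (simp add: linear_cmul[OF has_derivative_linear[OF f']] mult.commute)
  then show ?thesis
    by (simp add: has_field_derivative_def dirderiv_has_derivative[OF f'])
qed

lemma second_difference_mean_value:
  fixes f :: "pt \<Rightarrow> real"
  assumes "open S"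
    and square: "\<And>s t. 0 \<le> s \<Longrightarrow> s \<le> h \<Longrightarrow> 0 \<le> t \<Longrightarrow> t \<le> h \<Longrightarrow> p + s *\<^sub>R v + t *\<^sub>R w \<in> S"
    and "f differentiable_on S" "dirderiv v f differentiable_on S" "0 < h"
  obtains \<xi> \<eta> where "0 < \<xi>" "\<xi> < h" "0 < \<eta>" "\<eta> < h"
    "f (p + h *\<^sub>R v + h *\<^sub>R w) - f (p + h *\<^sub>R v) - f (p + h *\<^sub>R w) + f p
       = h * h * dirderiv w (dirderiv v f) (p + \<xi> *\<^sub>R v + \<eta> *\<^sub>R w)"
proof -
  have diff: "g differentiable (at (p + s *\<^sub>R v + t *\<^sub>R w))"
    if "g differentiable_on S" "0 \<le> s" "s \<le> h" "0 \<le> t" "t \<le> h" for g :: "pt \<Rightarrow> real" and s t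
    using that square[of s t] \<open>open S\<close> differentiable_on_eq_differentiable_at by blast
  define g where "g s = f ((p + h *\<^sub>R w) + s *\<^sub>R v) - f (p + s *\<^sub>R v)" for s
  obtain \<xi> where \<xi>: "0 < \<xi>" "\<xi> < h" and g: "g h - g 0 = (h - 0) *
      (dirderiv v f ((p + h *\<^sub>R w) + \<xi> *\<^sub>R v) - dirderiv v f (p + \<xi> *\<^sub>R v))"
  proof (rule MVT2[OF \<open>0 < h\<close>, THEN exE], safe)
    fix s :: real assume "0 \<le> s" "s \<le> h"
    then show "(g has_real_derivative
        dirderiv v f ((p + h *\<^sub>R w) + s *\<^sub>R v) - dirderiv v f (p + s *\<^sub>R v)) (at s)"
      unfolding g_def using diff[OF assms(3), of s h] diff[OF assms(3), of s 0] \<open>0 < h\<close>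
      by (intro DERIV_diff has_real_derivative_dirderiv_line) (simp_all add: add_ac)
  qed blast
  define k where "k t = dirderiv v f ((p + \<xi> *\<^sub>R v) + t *\<^sub>R w)" for t
  obtain \<eta> where \<eta>: "0 < \<eta>" "\<eta> < h" and k: "k h - k 0 = (h - 0) *
      dirderiv w (dirderiv v f) ((p + \<xi> *\<^sub>R v) + \<eta> *\<^sub>R w)"
  proof (rule MVT2[OF \<open>0 < h\<close>, THEN exE], safe)
    fix t :: real assume "0 \<le> t" "t \<le> h"
    then show "(k has_real_derivative dirderiv w (dirderiv v f) ((p + \<xi> *\<^sub>R v) + t *\<^sub>R w)) (at t)"
      unfolding k_def using diff[OF assms(4), of \<xi> t] \<xi>
      by (intro has_real_derivative_dirderiv_line) simp
  qed blast
  have "g h - g 0 = h * (k h - k 0)"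
    unfolding g k_def by (simp add: add_ac)
  then show ?thesis
    using that \<xi> \<eta> k unfolding g_def by (simp add: add_ac)
qed

lemma dist_add_scaleR_le:
  assumes "0 \<le> s" "s \<le> h" "0 \<le> t" "t \<le> h"
  shows "dist (p + s *\<^sub>R a + t *\<^sub>R b) p \<le> h * (norm a + norm b)"
proof -
  have "dist (p + s *\<^sub>R a + t *\<^sub>R b) p \<le> s * norm a + t * norm b"
    using norm_triangle_ineq[of "s *\<^sub>R a" "t *\<^sub>R b"] assms by (simp add: dist_norm)
  also have "\<dots> \<le> h * (norm a + norm b)"
    using mult_right_mono[OF \<open>s \<le> h\<close>, of "norm a"] mult_right_mono[OF \<open>t \<le> h\<close>, of "norm b"]
    by (simp add: distrib_left)
  finally show ?thesis .
qed

lemma mixed_dirderivs_meet_in_ball: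
  fixes f :: "pt \<Rightarrow> real"
  assumes "open S" "f differentiable_on S"
    and "dirderiv v f differentiable_on S" "dirderiv w f differentiable_on S"
    and "d > 0" "ball p d \<subseteq> S"
  obtains q q' where "q \<in> ball p d" "q' \<in> ball p d"
    "dirderiv w (dirderiv v f) q = dirderiv v (dirderiv w f) q'"
proof -
  \<comment> \<open>both mixed derivatives compute the second difference of \<open>f\<close> over the square spanned by
    \<open>h v\<close> and \<open>h w\<close>, at points of the square chosen by the mean value theorem\<close>
  define N where "N = norm v + norm w + 1"
  define h where "h = d / (2 * N)"
  have "N > 0" "h > 0"
    using \<open>d > 0\<close> by (simp_all add: N_def h_def add_nonneg_pos)
  have "h * (norm v + norm w) < h * N"
    using \<open>h > 0\<close> by (simp add: N_def)
  also have "\<dots> < d"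
    using \<open>d > 0\<close> \<open>N > 0\<close> by (simp add: h_def)
  finally have in_ball: "p + s *\<^sub>R a + t *\<^sub>R b \<in> ball p d"
    if "0 \<le> s" "s \<le> h" "0 \<le> t" "t \<le> h" "norm a + norm b = norm v + norm w" for s t a b
    using dist_add_scaleR_le[OF that(1-4), of p a b] that(5) by (simp add: dist_commute)
  have square: "p + s *\<^sub>R a + t *\<^sub>R b \<in> S"
    if "0 \<le> s" "s \<le> h" "0 \<le> t" "t \<le> h" "norm a + norm b = norm v + norm w" for s t a b
    using in_ball[OF that] \<open>ball p d \<subseteq> S\<close> by blast
  obtain \<xi> \<eta> where "0 < \<xi>" "\<xi> < h" "0 < \<eta>" "\<eta> < h" and vw:
     "f (p + h *\<^sub>R v + h *\<^sub>R w) - f (p + h *\<^sub>R v) - f (p + h *\<^sub>R w) + f p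
       = h * h * dirderiv w (dirderiv v f) (p + \<xi> *\<^sub>R v + \<eta> *\<^sub>R w)"
    using second_difference_mean_value[OF assms(1) square assms(2,3) \<open>h > 0\<close>] by blast
  obtain \<xi>' \<eta>' where "0 < \<xi>'" "\<xi>' < h" "0 < \<eta>'" "\<eta>' < h" and wv:
     "f (p + h *\<^sub>R v + h *\<^sub>R w) - f (p + h *\<^sub>R w) - f (p + h *\<^sub>R v) + f p
       = h * h * dirderiv v (dirderiv w f) (p + \<xi>' *\<^sub>R w + \<eta>' *\<^sub>R v)"
    using second_difference_mean_value[where v=w and w=v, OF assms(1) square assms(2,4) \<open>h > 0\<close>]
    by (simp add: add_ac) blast
  from vw wv have "h * h * dirderiv w (dirderiv v f) (p + \<xi> *\<^sub>R v + \<eta> *\<^sub>R w)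
      = h * h * dirderiv v (dirderiv w f) (p + \<xi>' *\<^sub>R w + \<eta>' *\<^sub>R v)"
    by linarith
  then have "dirderiv w (dirderiv v f) (p + \<xi> *\<^sub>R v + \<eta> *\<^sub>R w)
      = dirderiv v (dirderiv w f) (p + \<xi>' *\<^sub>R w + \<eta>' *\<^sub>R v)"
    using \<open>h > 0\<close> by simp
  moreover have "p + \<xi> *\<^sub>R v + \<eta> *\<^sub>R w \<in> ball p d" "p + \<xi>' *\<^sub>R w + \<eta>' *\<^sub>R v \<in> ball p d"
    using in_ball \<open>0 < \<xi>\<close> \<open>\<xi> < h\<close> \<open>0 < \<eta>\<close> \<open>\<eta> < h\<close> \<open>0 < \<xi>'\<close> \<open>\<xi>' < h\<close> \<open>0 < \<eta>'\<close> \<open>\<eta>' < h\<close>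
    by (simp_all add: add.commute)
  ultimately show ?thesis
    using that by blast
qed

lemma dirderiv_commute_real:
  fixes f :: "pt \<Rightarrow> real"
  assumes "open S" "p \<in> S" "f differentiable_on S"
    and "dirderiv v f differentiable_on S" "dirderiv w f differentiable_on S"
    and "continuous (at p) (dirderiv w (dirderiv v f))"
    and "continuous (at p) (dirderiv v (dirderiv w f))"
  shows "dirderiv w (dirderiv v f) p = dirderiv v (dirderiv w f) p"
proof (rule ccontr)
  let ?A = "dirderiv w (dirderiv v f)" and ?B = "dirderiv v (dirderiv w f)"
  assume "?A p \<noteq> ?B p"
  define e where "e = dist (?A p) (?B p) / 2"
  have "e > 0"
    using \<open>?A p \<noteq> ?B p\<close> by (simp add: e_def)
  obtain r dA dB where "r > 0" "ball p r \<subseteq> S" "dA > 0" "dB > 0"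
    and dA: "\<And>q. dist q p < dA \<Longrightarrow> dist (?A q) (?A p) < e"
    and dB: "\<And>q. dist q p < dB \<Longrightarrow> dist (?B q) (?B p) < e"
    using assms(1,2,6,7) \<open>e > 0\<close> openE unfolding continuous_at_eps_delta by metis
  define d where "d = min r (min dA dB)"
  have "d > 0" "ball p d \<subseteq> S"
    using \<open>r > 0\<close> \<open>dA > 0\<close> \<open>dB > 0\<close> \<open>ball p r \<subseteq> S\<close> by (auto simp: d_def)
  then obtain q q' where "q \<in> ball p d" "q' \<in> ball p d" "?A q = ?B q'"
    using mixed_dirderivs_meet_in_ball[OF assms(1,3-5)] by blast
  have "dist (?A q) (?A p) < e" "dist (?B q') (?B p) < e"
    using dA[of q] dB[of q'] \<open>q \<in> ball p d\<close> \<open>q' \<in> ball p d\<close> by (simp_all add: d_def dist_commute)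
  with \<open>?A q = ?B q'\<close> have "dist (?A p) (?B p) < 2 * e"
    by (metis dist_commute dist_triangle_less_add mult_2)
  then show False
    by (simp add: e_def)
qed

lemma iter_dirderiv_append: "iter_dirderiv (vs @ ws) f = iter_dirderiv vs (iter_dirderiv ws f)"
  by (induction vs) auto

lemma smooth_on_dirderiv:
  assumes "smooth_on S f" "v \<in> Basis"
  shows "smooth_on S (dirderiv v f)"
  unfolding smooth_on_def
proof (intro allI impI)
  fix vs :: "pt list"
  assume "set vs \<subseteq> Basis"
  then have "iter_dirderiv (vs @ [v]) f differentiable_on S"
    using assms by (simp add: smooth_on_def)
  then show "iter_dirderiv vs (dirderiv v f) differentiable_on S"
    by (simp add: iter_dirderiv_append)
qed

lemma smooth_on_imp_differentiable_on: "smooth_on S f \<Longrightarrow> f differentiable_on S"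
  unfolding smooth_on_def by (metis empty_subsetI iter_dirderiv.simps(1) empty_set)

lemma smooth_on_imp_differentiable_at:
  "open S \<Longrightarrow> smooth_on S f \<Longrightarrow> x \<in> S \<Longrightarrow> f differentiable (at x)"
  using differentiable_on_eq_differentiable_at smooth_on_imp_differentiable_on by blast

lemma time_direction_in_Basis: "((1::real), (0::real^3)) \<in> Basis"
  by (simp add: Basis_prod_def)

lemma space_direction_in_Basis: "((0::real), axis i (1::real)) \<in> Basis"
  by (auto simp: Basis_prod_def Basis_vec_def)

lemma smooth_on_dt: "smooth_on S f \<Longrightarrow> smooth_on S (dt f)"
  unfolding dt_def by (erule smooth_on_dirderiv[OF _ time_direction_in_Basis])

lemma smooth_on_dx: "smooth_on S f \<Longrightarrow> smooth_on S (dx i f)"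
  unfolding dx_def by (erule smooth_on_dirderiv[OF _ space_direction_in_Basis])

lemma iter_dirderiv_bounded_linear:
  assumes "open S" "smooth_on S f" "bounded_linear L" "set vs \<subseteq> Basis" "x \<in> S"
  shows "iter_dirderiv vs (\<lambda>q. L (f q)) x = L (iter_dirderiv vs f x)"
  using assms(4,5)
proof (induction vs arbitrary: x)
  case (Cons v vs)
  have "iter_dirderiv (v # vs) (\<lambda>q. L (f q)) x = dirderiv v (\<lambda>q. L (iter_dirderiv vs f q)) x"
    using Cons by (auto intro: dirderiv_cong_open[OF assms(1)])
  also have "\<dots> = L (iter_dirderiv (v # vs) f x)"
    using Cons.prems assms(1,2)
    by (auto intro!: dirderiv_bounded_linear[OF assms(3)] simp: smooth_on_def differentiable_on_eq_differentiable_at)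
  finally show ?case .
qed simp

lemma smooth_on_bounded_linear:
  assumes "open S" "smooth_on S f" "bounded_linear L"
  shows "smooth_on S (\<lambda>q. L (f q))"
  unfolding smooth_on_def
proof (intro allI impI)
  fix vs :: "pt list"
  assume vs: "set vs \<subseteq> Basis"
  have "iter_dirderiv vs (\<lambda>q. L (f q)) differentiable (at x)" if "x \<in> S" for x
  proof -
    obtain D where "(iter_dirderiv vs f has_derivative D) (at x)"
      using assms(1,2) vs \<open>x \<in> S\<close>
      by (meson smooth_on_def differentiable_def differentiable_on_eq_differentiable_at)
    from bounded_linear.has_derivative[OF assms(3) this]
    have "((\<lambda>q. L (iter_dirderiv vs f q)) has_derivative (\<lambda>h. L (D h))) (at x)" .
    then show ?thesis
      using has_derivative_transform_within_open[OF _ assms(1) \<open>x \<in> S\<close>]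
        iter_dirderiv_bounded_linear[OF assms vs] unfolding differentiable_def by metis
  qed
  then show "iter_dirderiv vs (\<lambda>q. L (f q)) differentiable_on S"
    using assms(1) by (simp add: differentiable_on_eq_differentiable_at)
qed

lemma smooth_on_dirderiv_commute:
  fixes f :: "pt \<Rightarrow> 'a::euclidean_space"
  assumes "open S" "smooth_on S f" "p \<in> S" "v \<in> Basis" "w \<in> Basis"
  shows "dirderiv w (dirderiv v f) p = dirderiv v (dirderiv w f) p"
proof (rule euclidean_eqI)
  fix b :: 'a
  define g where "g q = f q \<bullet> b" for q
  have g: "smooth_on S g"
    unfolding g_def by (rule smooth_on_bounded_linear[OF assms(1,2) bounded_linear_inner_left])
  have mixed: "continuous (at p) (dirderiv a (dirderiv c g))" if "a \<in> Basis" "c \<in> Basis" for a c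
    using smooth_on_imp_differentiable_at[OF assms(1) _ assms(3)] smooth_on_dirderiv g that
    by (meson differentiable_imp_continuous_within)
  have "dirderiv w (dirderiv v g) p = dirderiv v (dirderiv w g) p"
    using assms(1,3,4,5) g
    by (intro dirderiv_commute_real mixed smooth_on_imp_differentiable_on smooth_on_dirderiv)
  moreover have "iter_dirderiv [a, c] g p = iter_dirderiv [a, c] f p \<bullet> b"
    if "a \<in> Basis" "c \<in> Basis" for a c
    unfolding g_def using that assms
    by (intro iter_dirderiv_bounded_linear[OF assms(1,2) bounded_linear_inner_left]) simp_all
  ultimately show "dirderiv w (dirderiv v f) p \<bullet> b = dirderiv v (dirderiv w f) p \<bullet> b"
    using assms(4,5) by (metis iter_dirderiv.simps)
qed

section \<open>Material derivative and vector identities\<close>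

lemma dx_vec_nth: "F differentiable (at q) \<Longrightarrow> dx i (\<lambda>q. F q $ k) q = dx i F q $ k"
  unfolding dx_def by (rule dirderiv_bounded_linear[OF bounded_linear_vec_nth])

lemma divg_eq_sum_dx: "F differentiable (at q) \<Longrightarrow> divg F q = (\<Sum>i\<in>UNIV. dx i F q $ i)"
  by (simp add: divg_def dx_vec_nth)

lemma matder_eq_dirderiv:
  assumes "g differentiable (at p)"
  shows "matder u g p = dirderiv (1, u p) g p"
proof -
  let ?L = "frechet_derivative g (at p)"
  have L: "linear ?L"
    using assms frechet_derivative_works has_derivative_linear by blast
  have "(1, u p) = (1, 0) + (\<Sum>i\<in>UNIV. u p $ i *\<^sub>R ((0::real), axis i (1::real)))"
    using basis_expansion[of "u p"] by (simp add: prod_eq_iff fst_sum snd_sum scalar_mult_eq_scaleR)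
  then have "?L (1, u p) = ?L (1, 0) + (\<Sum>i\<in>UNIV. u p $ i *\<^sub>R ?L (0, axis i 1))"
    by (simp only: linear_add[OF L] linear_sum[OF L] linear_scale[OF L])
  then show ?thesis
    by (simp add: matder_def dt_def dx_def dirderiv_eq_frechet_derivative[OF assms])
qed

lemma matder_eq_dt_along: "matder u f p = dt f p + along u f p"
  by (simp add: matder_def along_def)

lemma along_differentiable:
  assumes "open S" "smooth_on S f" "p \<in> S" "w differentiable (at p)"
  shows "along w f differentiable (at p)"
proof -
  have "(\<lambda>q. w q $ i *\<^sub>R dx i f q) differentiable (at p)" for i
    using smooth_on_imp_differentiable_at[OF assms(1) smooth_on_dx[OF assms(2)] assms(3)]
      differentiable_bounded_linear[OF bounded_linear_vec_nth assms(4)]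
    by (rule differentiable_bounded_bilinear[OF bounded_bilinear_scaleR, rotated])
  then show ?thesis
    by (simp add: along_def[abs_def])
qed

lemma matder_differentiable:
  assumes "open S" "smooth_on S f" "p \<in> S" "u differentiable (at p)"
  shows "matder u f differentiable (at p)"
  using smooth_on_imp_differentiable_at[OF assms(1) smooth_on_dt[OF assms(2)] assms(3)]
    along_differentiable[OF assms]
  by (simp add: matder_eq_dt_along[abs_def])

lemma matder_scaleR:
  assumes "a differentiable (at p)" "F differentiable (at p)"
  shows "matder u (\<lambda>q. a q *\<^sub>R F q) p = matder u a p *\<^sub>R F p + a p *\<^sub>R matder u F p"
  using assms differentiable_bounded_bilinear[OF bounded_bilinear_scaleR assms]
  by (simp add: matder_eq_dirderiv dirderiv_bounded_bilinear[OF bounded_bilinear_scaleR])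

lemma along_diff:
  assumes "F differentiable (at p)" "G differentiable (at p)"
  shows "along w (\<lambda>q. F q - G q) p = along w F p - along w G p"
  by (simp add: along_def dx_def dirderiv_diff[OF assms] scaleR_diff_right sum_subtractf)

lemma along_cong_open:
  "open S \<Longrightarrow> p \<in> S \<Longrightarrow> (\<And>q. q \<in> S \<Longrightarrow> F q = G q) \<Longrightarrow> along w F p = along w G p"
  unfolding along_def dx_def by (simp cong: dirderiv_cong_open)

lemma matder_cong_open:
  "open S \<Longrightarrow> p \<in> S \<Longrightarrow> (\<And>q. q \<in> S \<Longrightarrow> F q = G q) \<Longrightarrow> matder u F p = matder u G p"
  unfolding matder_def dt_def dx_def by (simp cong: dirderiv_cong_open)

lemma matder_dx_commute:
  fixes f :: "pt \<Rightarrow> 'a::euclidean_space"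
  assumes "open S" "smooth_on S f" "p \<in> S" "u differentiable (at p)"
  shows "matder u (dx j f) p = dx j (matder u f) p - along (dx j u) f p"
proof -
  have diff: "g differentiable (at p)" if "smooth_on S g" for g :: "pt \<Rightarrow> 'a"
    using smooth_on_imp_differentiable_at[OF assms(1) that assms(3)] .
  have u_i: "(\<lambda>q. u q $ i) differentiable (at p)" for i
    by (rule differentiable_bounded_linear[OF bounded_linear_vec_nth assms(4)])
  have u_i_dx: "(\<lambda>q. u q $ i *\<^sub>R dx i f q) differentiable (at p)" for i
    using differentiable_bounded_bilinear[OF bounded_bilinear_scaleR u_i diff] smooth_on_dx[OF assms(2)] by blast
  have swap: "dirderiv a (dirderiv (0, axis j 1) f) p = dirderiv (0, axis j 1) (dirderiv a f) p"
    if "a \<in> Basis" for a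
    using smooth_on_dirderiv_commute[OF assms(1-3) space_direction_in_Basis that] .
  have "dx j (matder u f) p = dx j (\<lambda>q. dt f q + (\<Sum>i\<in>UNIV. u q $ i *\<^sub>R dx i f q)) p"
    by (simp add: matder_def[abs_def])
  also have "\<dots> = dx j (dt f) p + (\<Sum>i\<in>UNIV. dx j u p $ i *\<^sub>R dx i f p + u p $ i *\<^sub>R dx j (dx i f) p)"
    using diff[OF smooth_on_dt[OF assms(2)]] u_i_dx
    by (simp add: dx_def dirderiv_add differentiable_sum dirderiv_sum
        dirderiv_bounded_bilinear[OF bounded_bilinear_scaleR u_i diff[OF smooth_on_dx[OF assms(2)]],
          unfolded dx_def]
        dx_vec_nth[OF assms(4), unfolded dx_def])
  also have "\<dots> = matder u (dx j f) p + along (dx j u) f p"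
    using swap[OF time_direction_in_Basis] swap[OF space_direction_in_Basis]
    by (simp add: matder_def along_def dt_def dx_def sum.distrib)
  finally show ?thesis
    by simp
qed

lemma matder_along_commute:
  fixes f :: "pt \<Rightarrow> 'a::euclidean_space"
  assumes "open S" "smooth_on S f" "p \<in> S" "u differentiable (at p)" "b differentiable (at p)"
  shows "matder u (along b f) p
           = along (matder u b) f p + along b (matder u f) p - along (along b u) f p"
proof -
  have dx_f: "dx j f differentiable (at p)" for j
    using smooth_on_imp_differentiable_at[OF assms(1) smooth_on_dx[OF assms(2)] assms(3)] .
  have b_j: "(\<lambda>q. b q $ j) differentiable (at p)" for j
    by (rule differentiable_bounded_linear[OF bounded_linear_vec_nth assms(5)])
  have b_j_dx: "(\<lambda>q. b q $ j *\<^sub>R dx j f q) differentiable (at p)" for j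
    by (rule differentiable_bounded_bilinear[OF bounded_bilinear_scaleR b_j dx_f])
  have dx_f_commute: "matder u (dx j f) p = dx j (matder u f) p - along (dx j u) f p" for j
    by (rule matder_dx_commute[OF assms(1-4)])
  have "matder u (along b f) p = dirderiv (1, u p) (\<lambda>q. \<Sum>j\<in>UNIV. b q $ j *\<^sub>R dx j f q) p"
    using b_j_dx by (simp add: along_def[abs_def] matder_eq_dirderiv differentiable_sum)
  also have "\<dots> = (\<Sum>j\<in>UNIV. matder u b p $ j *\<^sub>R dx j f p + b p $ j *\<^sub>R matder u (dx j f) p)"
    using b_j_dx dx_f assms(5)
    by (simp add: dirderiv_sum dirderiv_bounded_bilinear[OF bounded_bilinear_scaleR b_j dx_f]
        dirderiv_bounded_linear[OF bounded_linear_vec_nth] matder_eq_dirderiv)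
  also have "\<dots> = along (matder u b) f p + (\<Sum>j\<in>UNIV. b p $ j *\<^sub>R (dx j (matder u f) p - along (dx j u) f p))"
    by (simp add: dx_f_commute along_def sum.distrib)
  also have "\<dots> = along (matder u b) f p + along b (matder u f) p - (\<Sum>j\<in>UNIV. b p $ j *\<^sub>R along (dx j u) f p)"
    by (simp add: along_def scaleR_diff_right sum_subtractf)
  also have "(\<Sum>j\<in>UNIV. b p $ j *\<^sub>R along (dx j u) f p) = along (along b u) f p"
    unfolding along_def by (simp add: sum_component scaleR_sum_left scaleR_sum_right) (rule sum.swap)
  finally show ?thesis .
qed

lemma bounded_bilinear_cross3: "bounded_bilinear cross3"
  using bilinear_conv_bounded_bilinear bilinear_cross by blast

lemma curl_cross3:
  assumes "u differentiable (at q)" "B differentiable (at q)"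
  shows "curl (\<lambda>q. cross3 (u q) (B q)) q = divg B q *\<^sub>R u q - divg u q *\<^sub>R B q + along B u q - along u B q"
proof -
  have dx_cross: "dx i (\<lambda>q. cross3 (u q) (B q)) q = cross3 (dx i u q) (B q) + cross3 (u q) (dx i B q)" for i
    unfolding dx_def by (rule dirderiv_bounded_bilinear[OF bounded_bilinear_cross3 assms])
  show ?thesis
    unfolding curl_def dx_vec_nth[OF differentiable_bounded_bilinear[OF bounded_bilinear_cross3 assms]] dx_cross
    by (simp add: divg_eq_sum_dx assms along_def vec_eq_iff forall_3 sum_3 cross3_def vector_3 algebra_simps)
qed

lemma cross3_curl_self:
  assumes "B differentiable (at q)"
  shows "cross3 (curl B q) (B q) = along B B q - (\<chi> i. dx i B q \<bullet> B q)"
  by (simp add: curl_def dx_vec_nth[OF assms] along_def vec_eq_iff forall_3 sum_3 cross3_def vector_3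
      inner_vec_def algebra_simps)

lemma grad_totpress:
  assumes "pr differentiable (at q)" "B differentiable (at q)"
  shows "grad (totpress pr B) q = grad pr q + (\<chi> i. dx i B q \<bullet> B q)"
proof -
  have BB: "(\<lambda>q. B q \<bullet> B q) differentiable (at q)"
    by (rule differentiable_bounded_bilinear[OF bounded_bilinear_inner assms(2) assms(2)])
  have "totpress pr B = (\<lambda>q. pr q + (B q \<bullet> B q) / 2)"
    by (simp add: fun_eq_iff totpress_def power2_norm_eq_inner)
  then show ?thesis
    by (simp add: grad_def dx_def vec_eq_iff assms(1) BB dirderiv_add
        differentiable_bounded_linear[OF bounded_linear_divide]
        dirderiv_bounded_linear[OF bounded_linear_divide BB]
        dirderiv_bounded_bilinear[OF bounded_bilinear_inner assms(2) assms(2)] inner_commute)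
qed

section \<open>Ideal compressible MHD\<close>

lemma ICMHD_differentiable:
  assumes "ICMHD \<Omega> u \<rho> \<sigma> pr B" "q \<in> \<Omega>"
  shows "u differentiable (at q)" "B differentiable (at q)" "pr differentiable (at q)"
    and "(\<lambda>q. inverse (\<rho> q)) differentiable (at q)" "Brho \<rho> B differentiable (at q)"
proof -
  have "open \<Omega>" "smooth_on \<Omega> u" "smooth_on \<Omega> B" "smooth_on \<Omega> pr" "smooth_on \<Omega> \<rho>" "\<rho> q > 0"
    using assms unfolding ICMHD_def by blast+
  then show "u differentiable (at q)" and B: "B differentiable (at q)" and "pr differentiable (at q)"
    using smooth_on_imp_differentiable_at[OF \<open>open \<Omega>\<close> _ assms(2)] by auto
  have "\<rho> differentiable (at q)"
    using smooth_on_imp_differentiable_at[OF \<open>open \<Omega>\<close> \<open>smooth_on \<Omega> \<rho>\<close> assms(2)] .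
  with \<open>\<rho> q > 0\<close> show inv: "(\<lambda>q. inverse (\<rho> q)) differentiable (at q)"
    by (simp add: differentiable_inverse)
  show "Brho \<rho> B differentiable (at q)"
    using differentiable_bounded_bilinear[OF bounded_bilinear_scaleR inv B] by (simp add: Brho_def[abs_def])
qed

lemma ICMHD_frozen_in:
  assumes "ICMHD \<Omega> u \<rho> \<sigma> pr B" "q \<in> \<Omega>"
  shows "matder u (Brho \<rho> B) q = along (Brho \<rho> B) u q"
proof -
  note diff = ICMHD_differentiable[OF assms]
  have divB: "divg B q = 0" and induction_law: "dt B q = curl (\<lambda>q. cross3 (u q) (B q)) q"
    and mass: "matder u (\<lambda>q. inverse (\<rho> q)) q = inverse (\<rho> q) * divg u q"
    using assms unfolding ICMHD_def by blast+
  have "matder u B q = along B u q - divg u q *\<^sub>R B q"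
    by (simp add: matder_eq_dt_along induction_law curl_cross3 diff divB)
  then have "matder u (Brho \<rho> B) q = inverse (\<rho> q) *\<^sub>R along B u q"
    using matder_scaleR[OF diff(4,2)] by (simp add: Brho_def[abs_def] mass scaleR_diff_right)
  then show ?thesis
    by (simp add: along_def Brho_def scaleR_sum_right)
qed

lemma ICMHD_momentum:
  assumes "ICMHD \<Omega> u \<rho> \<sigma> pr B" "q \<in> \<Omega>"
  shows "matder u u q = - (inverse (\<rho> q) *\<^sub>R grad pr q) + cross3 (curl B q) (Brho \<rho> B q)"
proof -
  have "\<rho> q > 0" and "\<rho> q *\<^sub>R matder u u q = - grad pr q + cross3 (curl B q) (B q)"
    using assms unfolding ICMHD_def by blast+
  then have "matder u u q = inverse (\<rho> q) *\<^sub>R (- grad pr q + cross3 (curl B q) (B q))"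
    by (metis less_irrefl scaleR_left_imp_eq scaleR_scaleR right_inverse scaleR_one)
  then show ?thesis
    by (simp add: Brho_def cross_mult_right scaleR_diff_right)
qed

lemma ICMHD_momentum_totpress:
  assumes "ICMHD \<Omega> u \<rho> \<sigma> pr B" "q \<in> \<Omega>"
  shows "matder u u q = dds \<rho> B B q - inverse (\<rho> q) *\<^sub>R grad (totpress pr B) q"
  using ICMHD_momentum[OF assms] ICMHD_differentiable[OF assms]
  by (simp add: cross3_curl_self grad_totpress dds_def along_def Brho_def cross_mult_right
      scaleR_sum_right algebra_simps)

lemma ICMHD_matder_matder_Brho:
  assumes "ICMHD \<Omega> u \<rho> \<sigma> pr B" "p \<in> \<Omega>"
  shows "matder u (matder u (Brho \<rho> B)) p = dds \<rho> B (matder u u) p"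
proof -
  have "open \<Omega>" "smooth_on \<Omega> u"
    using assms unfolding ICMHD_def by blast+
  let ?b = "Brho \<rho> B"
  have "matder u (matder u ?b) p = matder u (along ?b u) p"
    using ICMHD_frozen_in[OF assms(1)] by (intro matder_cong_open[OF \<open>open \<Omega>\<close> assms(2)])
  also have "\<dots> = along (matder u ?b) u p + along ?b (matder u u) p - along (along ?b u) u p"
    using ICMHD_differentiable[OF assms]
    by (intro matder_along_commute[OF \<open>open \<Omega>\<close> \<open>smooth_on \<Omega> u\<close> assms(2)])
  also have "along (matder u ?b) u p = along (along ?b u) u p"
    by (simp add: along_def ICMHD_frozen_in[OF assms])
  finally show ?thesis
    by (simp add: dds_def)
qed

lemma ICMHD_dds_grad_totpress:
  assumes "ICMHD \<Omega> u \<rho> \<sigma> pr B" "p \<in> \<Omega>"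
  shows "dds \<rho> B (\<lambda>q. inverse (\<rho> q) *\<^sub>R grad (totpress pr B) q) p
           = dds \<rho> B (dds \<rho> B B) p - dds \<rho> B (matder u u) p"
proof -
  have "open \<Omega>" "smooth_on \<Omega> u" "smooth_on \<Omega> B"
    using assms unfolding ICMHD_def by blast+
  have "dds \<rho> B (\<lambda>q. inverse (\<rho> q) *\<^sub>R grad (totpress pr B) q) p
          = dds \<rho> B (\<lambda>q. dds \<rho> B B q - matder u u q) p"
    unfolding dds_def using ICMHD_momentum_totpress[OF assms(1)]
    by (intro along_cong_open[OF \<open>open \<Omega>\<close> assms(2)]) (simp add: dds_def)
  also have "\<dots> = dds \<rho> B (dds \<rho> B B) p - dds \<rho> B (matder u u) p"
    unfolding dds_def
    using along_differentiable[OF \<open>open \<Omega>\<close> \<open>smooth_on \<Omega> B\<close> assms(2) ICMHD_differentiable(5)[OF assms]]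
      matder_differentiable[OF \<open>open \<Omega>\<close> \<open>smooth_on \<Omega> u\<close> assms(2) ICMHD_differentiable(1)[OF assms]]
    by (rule along_diff)
  finally show ?thesis .
qed

theorem mainTheorem6:
  fixes \<Omega> :: "pt set" and u B :: "pt \<Rightarrow> real^3" and \<rho> \<sigma> pr :: "pt \<Rightarrow> real"
  assumes "ICMHD \<Omega> u \<rho> \<sigma> pr B"
    and "p \<in> \<Omega>"
  shows "(matder u (matder u (Brho \<rho> B)) p - dds \<rho> B (dds \<rho> B B) p
           = - dds \<rho> B (\<lambda>q. inverse (\<rho> q) *\<^sub>R grad (totpress pr B) q) p)
         \<and> (matder u (matder u (Brho \<rho> B)) p = dds \<rho> B (matder u u) p)
         \<and> (matder u (matder u (Brho \<rho> B)) p
           = along (Brho \<rho> B) (\<lambda>q. - (inverse (\<rho> q) *\<^sub>R grad pr q)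
                                    + cross3 (curl B q) (Brho \<rho> B q)) p)"
proof -
  have "open \<Omega>"
    using assms unfolding ICMHD_def by blast
  have "dds \<rho> B (matder u u) p
          = along (Brho \<rho> B) (\<lambda>q. - (inverse (\<rho> q) *\<^sub>R grad pr q) + cross3 (curl B q) (Brho \<rho> B q)) p"
    unfolding dds_def using ICMHD_momentum[OF assms(1)] by (intro along_cong_open[OF \<open>open \<Omega>\<close> assms(2)])
  then show ?thesis
    using ICMHD_matder_matder_Brho[OF assms] ICMHD_dds_grad_totpress[OF assms] by simp
qed

end
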